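(* Let $L\in\mathbb N$, $L\ge2$, ${\bf A}\in\mathbb R^{M\times N}$, ${\bf b}\in\mathbb R^M$ with ${\bf b}\neq0$, and assume $S_+=\{{\bf z}\ge0:{\bf A}{\bf z}={\bf b}\}$ is non-empty. Let $(r,{\bf u})$ follow the weight-normalized gradient flow with learning rates $\eta_r(t)=r(t)^2$, $\eta_{\bf u}=1$, with $r(0)>0$, ${\bf u}(0)>0$, $\|{\bf u}(0)\|_2=1$, and put ${\bf x}=\frac{r}{\|{\bf u}\|_2}{\bf u}$. Then $\lim_{t\to\infty}\mathcal L({\bf x}(t))=0$.
   Context: $\odot$ denotes entrywise power; vector inequalities are entrywise. Loss: $\mathcal L({\bf x})=\frac{1}{2L}\|{\bf A}{\bf x}^{\odot L}-{\bf b}\|_2^2$. Weight-normalized loss $\tilde{\mathcal L}(r,{\bf u})=\mathcal L\big(\frac{r}{\|{\bf u}\|_2}{\bf u}\big)$. Weight-normalized gradient flow: $\partial_t r=-\eta_r\nabla_r\tilde{\mathcal L}(r,{\bf u})$, $\partial_t{\bf u}=-\eta_{\bf u}\nabla_{\bf u}\tilde{\mathcal L}(r,{\bf u})$, $r(0)=r_0$, ${\bf u}(0)={\bf u}_0$. *)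

theory Defs
  imports "HOL-Analysis.Analysis"
begin

definition epow :: "real^'n \<Rightarrow> nat \<Rightarrow> real^'n" where
  "epow x L = (\<chi> i. (x $ i) ^ L)"

definition loss :: "nat \<Rightarrow> real^'n^'m \<Rightarrow> real^'m \<Rightarrow> real^'n \<Rightarrow> real" where
  "loss L A b x = (1 / (2 * real L)) * (norm (A *v epow x L - b))\<^sup>2"

definition wn_loss :: "nat \<Rightarrow> real^'n^'m \<Rightarrow> real^'m \<Rightarrow> real \<Rightarrow> real^'n \<Rightarrow> real" where
  "wn_loss L A b r u = loss L A b ((r / norm u) *\<^sub>R u)"

end

theory Submission
  imports Defs
begin

text \<open>
  Since the weight-normalized loss is invariant under positive rescaling of \<open>u\<close>, the flow keeps
  \<open>\<parallel>u\<parallel> = 1\<close>, and the choice \<open>\<eta>\<^sub>r = r\<^sup>2\<close> turns \<open>y = r u\<close> into the gradient flow of the loss slowed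
  down by \<open>\<parallel>y\<parallel>\<^sup>2\<close>: \<open>y' = - \<parallel>y\<parallel>\<^sup>2 \<nabla>loss(y)\<close>. Its coordinates stay positive. For a nonnegative
  solution \<open>z\<close> of \<open>A z = b\<close>, the function \<open>F(y) = \<Sum>\<^sub>i y\<^sub>i\<^sup>2/2 - z\<^sub>i G(y\<^sub>i)\<close> with \<open>G'(x) = 1 / x^(L-1)\<close> satisfies
  \<open>F' = - 2L \<parallel>y\<parallel>\<^sup>2 loss(y)\<close>, so it decreases; it is bounded below, and since \<open>G(x) \<rightarrow> -\<infinity>\<close> as \<open>x \<rightarrow> 0\<close>,
  a coordinate with \<open>z\<^sub>k > 0\<close> stays above some \<open>\<delta> > 0\<close>. Then \<open>F(y) + 2L\<delta>\<^sup>2 t loss(y)\<close> is also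
  nonincreasing, which gives \<open>loss(y(t)) = O(1/t)\<close>.
\<close>

lemma nonincreasing_of_deriv_nonpos:
  fixes \<phi> :: "real \<Rightarrow> real"
  assumes deriv: "\<And>t. t \<ge> a \<Longrightarrow> (\<phi> has_real_derivative \<phi>' t) (at t within {a..})"
    and nonpos: "\<And>t. t \<ge> a \<Longrightarrow> \<phi>' t \<le> 0"
    and "a \<le> t"
  shows "\<phi> t \<le> \<phi> a"
proof -
  have "\<And>s. a \<le> s \<Longrightarrow> s \<le> t \<Longrightarrow> (\<phi> has_derivative (*) (\<phi>' s)) (at s within {a..t})"
    using deriv unfolding has_field_derivative_def
    by (meson atLeastAtMost_iff atLeast_iff has_derivative_subset subsetI)
  from mvt_very_simple[OF \<open>a \<le> t\<close> this]
  obtain s where "s \<in> {a..t}" "\<phi> t - \<phi> a = \<phi>' s * (t - a)" by blast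
  moreover have "\<phi>' s * (t - a) \<le> 0"
    using nonpos \<open>a \<le> t\<close> \<open>s \<in> {a..t}\<close> by (simp add: mult_nonpos_nonneg)
  ultimately show ?thesis by simp
qed

text \<open>If \<open>\<phi>' = c \<phi>\<close>, then \<open>\<phi> \<cdot> exp (- \<integral>\<^sub>0\<^sup>t c)\<close> is constant.\<close>

lemma positive_of_deriv_proportional:
  fixes \<phi> c :: "real \<Rightarrow> real"
  assumes pos: "\<phi> 0 > 0" and cont: "continuous_on {0..} c"
    and deriv: "\<And>t. t \<ge> 0 \<Longrightarrow> (\<phi> has_real_derivative c t * \<phi> t) (at t within {0..})"
    and "t \<ge> 0"
  shows "\<phi> t > 0"
proof -
  define C where "C s = integral {0..s} c" for s
  have "((\<lambda>s. \<phi> s * exp (- C s)) has_real_derivative 0) (at s within {0..t})" if "s \<in> {0..t}" for s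
  proof -
    have "(C has_real_derivative c s) (at s within {0..t})"
      unfolding C_def using that
      by (intro integral_has_real_derivative continuous_on_subset[OF cont]) auto
    moreover have "(\<phi> has_real_derivative c s * \<phi> s) (at s within {0..t})"
      using deriv[of s] that by (auto intro: DERIV_subset)
    ultimately show ?thesis
      by (auto intro!: derivative_eq_intros)
  qed
  then obtain k where "\<forall>s\<in>{0..t}. \<phi> s * exp (- C s) = k"
    using has_field_derivative_zero_constant[OF convex_real_interval(5)] by blast
  then have "\<phi> t * exp (- C t) = \<phi> 0 * exp (- C 0)"
    using \<open>t \<ge> 0\<close> by auto
  with pos have "\<phi> t * exp (- C t) > 0"
    by simp
  then show ?thesis
    by (simp add: zero_less_mult_iff)
qed

definition residual_grad :: "nat \<Rightarrow> real^'n^'m \<Rightarrow> real^'m \<Rightarrow> real^'n \<Rightarrow> real^'n" where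
  "residual_grad L A b y = (A *v epow y L - b) v* A"

definition loss_grad :: "nat \<Rightarrow> real^'n^'m \<Rightarrow> real^'m \<Rightarrow> real^'n \<Rightarrow> real^'n" where
  "loss_grad L A b y = (\<chi> i. (y $ i) ^ (L - 1) * residual_grad L A b y $ i)"

lemma has_derivative_vec_nth [derivative_intros]: "((\<lambda>y. y $ i) has_derivative (\<lambda>h. h $ i)) F"
  by (rule bounded_linear_imp_has_derivative) (rule bounded_linear_vec_nth)

lemma loss_nonneg: "0 \<le> loss L A b x"
  by (simp add: loss_def)

lemma loss_eq_sum:
  "loss L A b y = (1 / (2 * real L)) * (\<Sum>j\<in>UNIV. ((\<Sum>i\<in>UNIV. A $ j $ i * (y $ i) ^ L) - b $ j)\<^sup>2)"
  unfolding loss_def power2_norm_eq_inner inner_vec_def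
  by (simp add: matrix_vector_mult_def epow_def power2_eq_square)

lemma has_derivative_loss:
  assumes "1 \<le> L"
  shows "(loss L A b has_derivative (\<lambda>h. loss_grad L A b y \<bullet> h)) (at y within S)"
  unfolding loss_eq_sum[abs_def]
  apply (rule derivative_eq_intros refl)+
  apply (rule ext)
  apply (simp add: loss_grad_def residual_grad_def inner_vec_def vector_matrix_mult_def
      matrix_vector_mult_def epow_def sum_distrib_left sum_distrib_right)
  apply (subst sum.swap)
  apply (rule sum.cong, rule refl)+
  using assms apply (simp add: field_simps)
  done

lemma has_derivative_loss_compose:
  assumes "1 \<le> L" "(f has_derivative f') (at x within S)"
  shows "((\<lambda>x. loss L A b (f x)) has_derivative (\<lambda>h. loss_grad L A b (f x) \<bullet> f' h)) (at x within S)"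
  using has_derivative_compose[OF assms(2) has_derivative_loss[OF assms(1)]] .

lemma continuous_on_residual_grad:
  "continuous_on S f \<Longrightarrow> continuous_on S (\<lambda>t. residual_grad L A b (f t))"
  unfolding residual_grad_def vector_matrix_mult_def epow_def matrix_vector_mult_def
  by (intro continuous_intros)

lemma wn_loss_scaleR:
  assumes "c > 0"
  shows "wn_loss L A b R (c *\<^sub>R v) = wn_loss L A b R v"
  using assms by (cases "v = 0") (simp_all add: wn_loss_def)

text \<open>Euler's identity for the \<open>0\<close>-homogeneous function \<open>w \<mapsto> wn_loss L A b R w\<close>.\<close>

lemma wn_loss_gradient_orthogonal:
  assumes "GDERIV (\<lambda>w. wn_loss L A b R w) v :> g"
  shows "v \<bullet> g = 0"
proof -
  have "((\<lambda>s. (1 + s) *\<^sub>R v) has_derivative (\<lambda>s. s *\<^sub>R v)) (at 0)"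
    by (auto intro!: derivative_eq_intros)
  moreover have "(wn_loss L A b R has_derivative (\<lambda>h. h \<bullet> g)) (at ((1 + 0) *\<^sub>R v))"
    using assms by (simp add: gderiv_def)
  ultimately have "((\<lambda>s. wn_loss L A b R ((1 + s) *\<^sub>R v)) has_derivative (\<lambda>s. (s *\<^sub>R v) \<bullet> g)) (at 0)"
    by (rule has_derivative_compose)
  moreover have "((\<lambda>s. wn_loss L A b R ((1 + s) *\<^sub>R v)) has_derivative (\<lambda>s. 0)) (at 0)"
    by (rule has_derivative_transform_within_open[where s = "{-1<..}", OF has_derivative_const])
       (auto simp: wn_loss_scaleR)
  ultimately have "(\<lambda>s. (s *\<^sub>R v) \<bullet> g) = (\<lambda>s. 0)"
    by (rule has_derivative_unique)
  from fun_cong[OF this, of 1] show ?thesis by simp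
qed

lemma wn_loss_derivatives:
  assumes L: "1 \<le> L" and v: "v \<noteq> 0"
    and dr: "((\<lambda>s. wn_loss L A b s v) has_real_derivative gr) (at R)"
    and du: "GDERIV (\<lambda>w. wn_loss L A b R w) v :> gu"
  defines "x \<equiv> (R / norm v) *\<^sub>R v"
  shows "gr = loss_grad L A b x \<bullet> v / norm v"
    and "gu = (R / norm v) *\<^sub>R loss_grad L A b x - (R * (loss_grad L A b x \<bullet> v) / norm v ^ 3) *\<^sub>R v"
proof -
  have "((\<lambda>s. wn_loss L A b s v) has_derivative (\<lambda>h. loss_grad L A b x \<bullet> ((h / norm v) *\<^sub>R v))) (at R)"
    unfolding wn_loss_def x_def using v
    by (intro has_derivative_loss_compose[OF L]) (auto intro!: derivative_eq_intros)
  moreover have "((\<lambda>s. wn_loss L A b s v) has_derivative (\<lambda>h. gr * h)) (at R)"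
    using dr by (simp add: has_field_derivative_def)
  ultimately have "(\<lambda>h. loss_grad L A b x \<bullet> ((h / norm v) *\<^sub>R v)) = (\<lambda>h. gr * h)"
    by (rule has_derivative_unique)
  from fun_cong[OF this, of 1] show "gr = loss_grad L A b x \<bullet> v / norm v" by simp
  define g where "g = (R / norm v) *\<^sub>R loss_grad L A b x - (R * (loss_grad L A b x \<bullet> v) / norm v ^ 3) *\<^sub>R v"
  have "((\<lambda>w. wn_loss L A b R w) has_derivative (\<lambda>h. h \<bullet> g)) (at v)"
    unfolding wn_loss_def
  proof (rule has_derivative_eq_rhs)
    show "((\<lambda>w. loss L A b ((R / norm w) *\<^sub>R w)) has_derivative
        (\<lambda>h. loss_grad L A b x \<bullet> ((R / norm v) *\<^sub>R h - (R * (h \<bullet> sgn v) / (norm v)\<^sup>2) *\<^sub>R v))) (at v)"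
      unfolding x_def using v
      by (intro has_derivative_loss_compose[OF L])
         (auto intro!: derivative_eq_intros has_derivative_norm simp: power2_eq_square)
    show "(\<lambda>h. loss_grad L A b x \<bullet> ((R / norm v) *\<^sub>R h - (R * (h \<bullet> sgn v) / (norm v)\<^sup>2) *\<^sub>R v)) =
        (\<lambda>h. h \<bullet> g)"
      by (auto simp: g_def sgn_div_norm inner_diff_right inner_diff_left inner_commute
          power2_eq_square power3_eq_cube field_simps)
  qed
  moreover have "((\<lambda>w. wn_loss L A b R w) has_derivative (\<lambda>h. h \<bullet> gu)) (at v)"
    using du by (simp add: gderiv_def)
  ultimately have "(\<lambda>h. h \<bullet> g) = (\<lambda>h. h \<bullet> gu)"
    by (rule has_derivative_unique)
  then have "(gu - g) \<bullet> (gu - g) = 0"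
    by (metis inner_diff_right inner_commute diff_self)
  then show "gu = (R / norm v) *\<^sub>R loss_grad L A b x - (R * (loss_grad L A b x \<bullet> v) / norm v ^ 3) *\<^sub>R v"
    unfolding g_def[symmetric] by simp
qed

definition wn_flow :: "nat \<Rightarrow> real^'n^'m \<Rightarrow> real^'m \<Rightarrow> (real \<Rightarrow> real) \<Rightarrow> (real \<Rightarrow> real^'n) \<Rightarrow> bool" where
  "wn_flow L A b r u \<longleftrightarrow> (\<forall>t\<ge>0. \<exists>gr gu.
     ((\<lambda>s. wn_loss L A b s (u t)) has_real_derivative gr) (at (r t)) \<and>
     (GDERIV (\<lambda>v. wn_loss L A b (r t) v) (u t) :> gu) \<and>
     (r has_real_derivative (- ((r t)\<^sup>2) * gr)) (at t within {0..}) \<and>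
     (u has_vector_derivative (- gu)) (at t within {0..}))"

lemma wn_flow_norm_const:
  assumes "wn_flow L A b r u" "t \<ge> 0"
  shows "norm (u t) = norm (u 0)"
proof -
  have "((\<lambda>s. (norm (u s))\<^sup>2) has_real_derivative 0) (at s within {0..})" if s: "s \<in> {0..}" for s
  proof -
    obtain gu where gu: "GDERIV (\<lambda>v. wn_loss L A b (r s) v) (u s) :> gu"
      and du: "(u has_vector_derivative - gu) (at s within {0..})"
      using assms(1) s unfolding wn_flow_def atLeast_iff by blast
    have "((\<lambda>s. u s \<bullet> u s) has_vector_derivative u s \<bullet> - gu + - gu \<bullet> u s) (at s within {0..})"
      by (rule bounded_bilinear.has_vector_derivative[OF bounded_bilinear_inner du du])
    then show ?thesis
      using wn_loss_gradient_orthogonal[OF gu]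
      by (simp add: power2_norm_eq_inner has_real_derivative_iff_has_vector_derivative inner_commute)
  qed
  then obtain c where "\<forall>s\<in>{0..}. (norm (u s))\<^sup>2 = c"
    using has_field_derivative_zero_constant[OF convex_real_interval(1)] by blast
  then have "(norm (u t))\<^sup>2 = (norm (u 0))\<^sup>2"
    using assms(2) by simp
  then show ?thesis
    using power2_eq_iff_nonneg by (meson norm_ge_zero)
qed

lemma wn_flow_product_deriv:
  assumes "wn_flow L A b r u" "1 \<le> L" "t \<ge> 0" "norm (u t) = 1"
  shows "((\<lambda>t. r t *\<^sub>R u t) has_vector_derivative
           - (norm (r t *\<^sub>R u t))\<^sup>2 *\<^sub>R loss_grad L A b (r t *\<^sub>R u t)) (at t within {0..})"
proof -
  obtain gr gu where dr: "((\<lambda>s. wn_loss L A b s (u t)) has_real_derivative gr) (at (r t))"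
    and gu: "GDERIV (\<lambda>v. wn_loss L A b (r t) v) (u t) :> gu"
    and r': "(r has_real_derivative (- ((r t)\<^sup>2) * gr)) (at t within {0..})"
    and u': "(u has_vector_derivative (- gu)) (at t within {0..})"
    using assms(1,3) unfolding wn_flow_def by blast
  have "u t \<noteq> 0" using assms(4) by auto
  define G where "G = loss_grad L A b (r t *\<^sub>R u t)"
  have gr: "gr = G \<bullet> u t" and gu: "gu = r t *\<^sub>R G - (r t * (G \<bullet> u t)) *\<^sub>R u t"
    using wn_loss_derivatives[OF assms(2) \<open>u t \<noteq> 0\<close> dr gu] by (simp_all add: assms(4) G_def)
  have "(norm (r t *\<^sub>R u t))\<^sup>2 = (r t)\<^sup>2"
    using assms(4) by (simp add: power_mult_distrib)
  then show ?thesis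
    unfolding G_def[symmetric]
    by (rule_tac has_vector_derivative_eq_rhs[OF has_vector_derivative_scaleR[OF r' u']])
       (simp add: gr gu algebra_simps power2_eq_square)
qed

definition inv_pow_antideriv :: "nat \<Rightarrow> real \<Rightarrow> real" where
  "inv_pow_antideriv L x = (if L = 2 then ln x else - 1 / ((real L - 2) * x ^ (L - 2)))"

lemma has_real_derivative_inv_pow_antideriv:
  assumes "L \<ge> 2" "x > 0"
  shows "(inv_pow_antideriv L has_real_derivative 1 / x ^ (L - 1)) (at x)"
proof (cases "L = 2")
  case True
  then show ?thesis
    using assms by (auto simp: inv_pow_antideriv_def[abs_def] intro!: derivative_eq_intros)
next
  case False
  define k where "k = L - 3"
  with assms(1) False have k: "L = k + 3"
    by simp
  have "((\<lambda>x. - 1 / ((1 + real k) * x ^ Suc k)) has_real_derivative 1 / x ^ Suc (Suc k)) (at x)"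
    using assms(2)
    by (auto intro!: derivative_eq_intros simp: divide_simps) (cases k; simp add: algebra_simps)
  then show ?thesis
    using False by (simp add: inv_pow_antideriv_def[abs_def] k)
qed

lemma inv_pow_antideriv_le:
  assumes "L \<ge> 2" "x > 0"
  shows "inv_pow_antideriv L x \<le> x"
proof (cases "L = 2")
  case True
  then show ?thesis
    using assms ln_le_minus_one[of x] by (simp add: inv_pow_antideriv_def)
next
  case False
  with assms have "0 < 1 / ((real L - 2) * x ^ (L - 2))"
    by simp
  moreover have "inv_pow_antideriv L x = - (1 / ((real L - 2) * x ^ (L - 2)))"
    using False by (simp add: inv_pow_antideriv_def)
  ultimately show ?thesis
    using assms(2) by linarith
qed

lemma inv_pow_antideriv_at_right_0:
  assumes "L \<ge> 2"
  shows "filterlim (inv_pow_antideriv L) at_bot (at_right 0)"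
proof (cases "L = 2")
  case True
  then show ?thesis
    using ln_at_0 by (simp add: inv_pow_antideriv_def[abs_def])
next
  case False
  then have n: "L - 2 > 0" "real L - 2 > 0"
    using assms by auto
  have "filterlim (\<lambda>x::real. x ^ (L - 2)) (at_right 0) (at_right 0)"
    unfolding filterlim_at using n
    by (auto intro!: tendsto_eq_intros eventually_mono[OF eventually_at_right_less])
  from filterlim_compose[OF filterlim_inverse_at_top_right this]
  have "filterlim (\<lambda>x::real. 1 / (real L - 2) * inverse (x ^ (L - 2))) at_top (at_right 0)"
    using n by (intro filterlim_tendsto_pos_mult_at_top[OF tendsto_const]) auto
  then have "filterlim (\<lambda>x::real. - (1 / (real L - 2) * inverse (x ^ (L - 2)))) at_bot (at_right 0)"
    by (simp only: filterlim_uminus_at_top)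
  moreover have "inv_pow_antideriv L = (\<lambda>x. - (1 / (real L - 2) * inverse (x ^ (L - 2))))"
    using False unfolding inv_pow_antideriv_def by (auto simp: divide_inverse)
  ultimately show ?thesis
    by (simp only:)
qed

lemma inv_pow_antideriv_bounded_below_imp_ge:
  assumes "L \<ge> 2"
  obtains \<delta> where "\<delta> > 0" "\<And>x. x > 0 \<Longrightarrow> inv_pow_antideriv L x \<ge> - M \<Longrightarrow> x \<ge> \<delta>"
proof -
  have "eventually (\<lambda>x. inv_pow_antideriv L x < - M) (at_right 0)"
    using inv_pow_antideriv_at_right_0[OF assms] by (simp add: filterlim_at_bot_dense)
  then obtain \<delta> where "\<delta> > 0" "\<And>x. x > 0 \<Longrightarrow> x < \<delta> \<Longrightarrow> inv_pow_antideriv L x < - M"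
    unfolding eventually_at_right_field by auto
  then show ?thesis
    using that by (meson not_le)
qed

definition potential :: "nat \<Rightarrow> real^'n \<Rightarrow> real^'n \<Rightarrow> real" where
  "potential L z v = (\<Sum>i\<in>UNIV. (v $ i)\<^sup>2 / 2 - z $ i * inv_pow_antideriv L (v $ i))"

lemma norm_vec_power2: "(norm x)\<^sup>2 = (\<Sum>i\<in>UNIV. (x $ i)\<^sup>2)" for x :: "real^'n"
  unfolding power2_norm_eq_inner inner_vec_def by (simp add: power2_eq_square)

lemma potential_term_lower_bound:
  assumes "L \<ge> 2" "x > 0" "c \<ge> 0"
  shows "- (c\<^sup>2 / 2) \<le> x\<^sup>2 / 2 - c * inv_pow_antideriv L x"
proof -
  have "c * inv_pow_antideriv L x \<le> c * x"
    using inv_pow_antideriv_le[OF assms(1,2)] assms(3) by (rule mult_left_mono)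
  moreover have "0 \<le> (x - c)\<^sup>2" by simp
  ultimately show ?thesis
    by (simp add: power2_eq_square algebra_simps)
qed

lemma potential_lower_bound:
  assumes "L \<ge> 2" "\<And>i. v $ i > 0" "\<And>i. z $ i \<ge> 0"
  shows "- (norm z)\<^sup>2 / 2 \<le> potential L z v"
proof -
  have "(\<Sum>i\<in>UNIV. - ((z $ i)\<^sup>2 / 2)) \<le> potential L z v"
    unfolding potential_def using assms by (intro sum_mono potential_term_lower_bound)
  then show ?thesis
    by (simp add: norm_vec_power2 sum_negf sum_divide_distrib)
qed

lemma potential_component_bound:
  assumes "L \<ge> 2" "\<And>i. v $ i > 0" "\<And>i. z $ i \<ge> 0"
  shows "- z $ k * inv_pow_antideriv L (v $ k) - (norm z)\<^sup>2 / 2 \<le> potential L z v"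
proof -
  have "potential L z v = ((v $ k)\<^sup>2 / 2 - z $ k * inv_pow_antideriv L (v $ k)) +
      (\<Sum>i\<in>UNIV - {k}. (v $ i)\<^sup>2 / 2 - z $ i * inv_pow_antideriv L (v $ i))"
    unfolding potential_def by (rule sum.remove) auto
  moreover have "(\<Sum>i\<in>UNIV - {k}. - ((z $ i)\<^sup>2 / 2)) \<le>
      (\<Sum>i\<in>UNIV - {k}. (v $ i)\<^sup>2 / 2 - z $ i * inv_pow_antideriv L (v $ i))"
    using assms by (intro sum_mono potential_term_lower_bound)
  moreover have "(\<Sum>i\<in>UNIV - {k}. (z $ i)\<^sup>2 / 2) \<le> (norm z)\<^sup>2 / 2"
    unfolding norm_vec_power2 sum_divide_distrib by (rule sum_mono2) auto
  moreover have "0 \<le> (v $ k)\<^sup>2 / 2"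
    by simp
  ultimately show ?thesis
    unfolding sum_negf by linarith
qed

locale scaled_gradient_flow =
  fixes L :: nat and A :: "real^'n^'m" and b :: "real^'m" and z :: "real^'n"
    and y :: "real \<Rightarrow> real^'n"
  assumes L: "L \<ge> 2"
    and b_nonzero: "b \<noteq> 0"
    and z_nonneg: "\<And>i. z $ i \<ge> 0"
    and z_solution: "A *v z = b"
    and y0_pos: "\<And>i. y 0 $ i > 0"
    and flow: "\<And>t. t \<ge> 0 \<Longrightarrow>
      (y has_vector_derivative - (norm (y t))\<^sup>2 *\<^sub>R loss_grad L A b (y t)) (at t within {0..})"
begin

lemma continuous_on_flow: "continuous_on {0..} y"
  by (rule continuous_on_vector_derivative) (use flow in auto)

lemma flow_component_deriv:
  assumes "t \<ge> 0"
  shows "((\<lambda>t. y t $ i) has_real_derivative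
           - (norm (y t))\<^sup>2 * ((y t $ i) ^ (L - 1) * residual_grad L A b (y t) $ i)) (at t within {0..})"
  using bounded_linear.has_vector_derivative[OF bounded_linear_vec_nth flow[OF assms]]
  by (simp add: has_real_derivative_iff_has_vector_derivative loss_grad_def)

lemma flow_pos:
  assumes "t \<ge> 0"
  shows "y t $ i > 0"
proof (rule positive_of_deriv_proportional[where \<phi> = "\<lambda>t. y t $ i", OF y0_pos _ _ assms])
  let ?c = "\<lambda>t. - (norm (y t))\<^sup>2 * (y t $ i) ^ (L - 2) * residual_grad L A b (y t) $ i"
  show "continuous_on {0..} ?c"
    by (intro continuous_intros continuous_on_residual_grad continuous_on_flow)
  have "(y t $ i) ^ (L - 1) = (y t $ i) ^ (L - 2) * y t $ i" for t
    using L by (simp add: power_Suc2[symmetric] Suc_diff_Suc numeral_2_eq_2)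
  then show "((\<lambda>t. y t $ i) has_real_derivative ?c t * y t $ i) (at t within {0..})" if "t \<ge> 0" for t
    using flow_component_deriv[OF that, of i] by (simp add: algebra_simps)
qed

lemma potential_flow_deriv:
  assumes "t \<ge> 0"
  shows "((\<lambda>t. potential L z (y t)) has_real_derivative
           - (2 * real L) * (norm (y t))\<^sup>2 * loss L A b (y t)) (at t within {0..})"
proof -
  define g where "g = residual_grad L A b (y t)"
  define dy where "dy i = - (norm (y t))\<^sup>2 * ((y t $ i) ^ (L - 1) * g $ i)" for i
  have pos: "y t $ i > 0" for i
    using flow_pos[OF assms] .
  have term_deriv: "((\<lambda>t. (y t $ i)\<^sup>2 / 2 - z $ i * inv_pow_antideriv L (y t $ i)) has_real_derivative
      y t $ i * dy i - z $ i * (1 / (y t $ i) ^ (L - 1) * dy i)) (at t within {0..})" for i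
    using flow_component_deriv[OF assms, of i]
      DERIV_chain2[OF has_real_derivative_inv_pow_antideriv[OF L pos] flow_component_deriv[OF assms]]
    unfolding dy_def g_def by (auto intro!: derivative_eq_intros)
  have term_eq: "y t $ i * dy i - z $ i * (1 / (y t $ i) ^ (L - 1) * dy i) =
      - (norm (y t))\<^sup>2 * ((epow (y t) L - z) $ i * g $ i)" for i
  proof -
    have "(y t $ i) ^ L = y t $ i * (y t $ i) ^ (L - 1)"
      using L by (simp add: power_Suc[symmetric] Suc_diff_Suc numeral_2_eq_2)
    with pos[of i] show ?thesis
      by (simp add: dy_def epow_def field_simps)
  qed
  have sum_deriv: "((\<lambda>t. potential L z (y t)) has_real_derivative
      (\<Sum>i\<in>UNIV. y t $ i * dy i - z $ i * (1 / (y t $ i) ^ (L - 1) * dy i))) (at t within {0..})"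
    unfolding potential_def by (rule DERIV_sum) (rule term_deriv)
  have "(\<Sum>i\<in>UNIV. y t $ i * dy i - z $ i * (1 / (y t $ i) ^ (L - 1) * dy i)) =
      - (norm (y t))\<^sup>2 * (\<Sum>i\<in>UNIV. (epow (y t) L - z) $ i * g $ i)"
    unfolding term_eq by (simp add: sum_distrib_left)
  also have "(\<Sum>i\<in>UNIV. (epow (y t) L - z) $ i * g $ i) = g \<bullet> (epow (y t) L - z)"
    by (simp add: inner_vec_def mult.commute)
  also have "\<dots> = (A *v epow (y t) L - b) \<bullet> (A *v epow (y t) L - b)"
    by (simp add: g_def residual_grad_def dot_lmul_matrix matrix_vector_mult_diff_distrib z_solution)
  also have "\<dots> = 2 * real L * loss L A b (y t)"
    using L by (simp add: loss_def power2_norm_eq_inner)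
  finally show ?thesis
    using sum_deriv by (simp add: mult_ac)
qed

lemma loss_flow_deriv:
  assumes "t \<ge> 0"
  shows "((\<lambda>t. loss L A b (y t)) has_real_derivative
           - (norm (y t))\<^sup>2 * (norm (loss_grad L A b (y t)))\<^sup>2) (at t within {0..})"
  unfolding has_field_derivative_def
proof (rule has_derivative_eq_rhs)
  show "((\<lambda>t. loss L A b (y t)) has_derivative (\<lambda>h. loss_grad L A b (y t) \<bullet>
      (h *\<^sub>R (- (norm (y t))\<^sup>2 *\<^sub>R loss_grad L A b (y t))))) (at t within {0..})"
    using L flow[OF assms] unfolding has_vector_derivative_def
    by (intro has_derivative_loss_compose) auto
qed (simp add: fun_eq_iff power2_norm_eq_inner)

lemma potential_le_initial:
  assumes "t \<ge> 0"
  shows "potential L z (y t) \<le> potential L z (y 0)"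
  by (rule nonincreasing_of_deriv_nonpos[OF potential_flow_deriv _ assms])
     (auto intro!: mult_nonpos_nonneg simp: loss_nonneg)

lemma flow_norm_lower_bound:
  obtains \<delta> where "\<delta> > 0" "\<And>t. t \<ge> 0 \<Longrightarrow> \<delta> \<le> norm (y t)"
proof -
  have "z \<noteq> 0"
    using z_solution b_nonzero by auto
  then obtain k where "z $ k \<noteq> 0"
    by (auto simp: vec_eq_iff)
  with z_nonneg have zk: "z $ k > 0"
    using order_le_neq_trans by metis
  define M where "M = (potential L z (y 0) + (norm z)\<^sup>2 / 2) / z $ k"
  obtain \<delta> where \<delta>: "\<delta> > 0" "\<And>x. x > 0 \<Longrightarrow> inv_pow_antideriv L x \<ge> - M \<Longrightarrow> x \<ge> \<delta>"
    using inv_pow_antideriv_bounded_below_imp_ge[OF L] by blast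
  have "\<delta> \<le> norm (y t)" if "t \<ge> 0" for t
  proof -
    have "- z $ k * inv_pow_antideriv L (y t $ k) - (norm z)\<^sup>2 / 2 \<le> potential L z (y 0)"
      using potential_component_bound[OF L flow_pos[OF that] z_nonneg, of k] potential_le_initial[OF that]
      by linarith
    then have "inv_pow_antideriv L (y t $ k) \<ge> - M"
      using zk by (simp add: M_def field_simps)
    then have "\<delta> \<le> y t $ k"
      using \<delta>(2) flow_pos[OF that] by blast
    also have "\<dots> \<le> norm (y t)"
      using component_le_norm_cart[of "y t" k] by simp
    finally show ?thesis .
  qed
  with \<delta>(1) that show ?thesis by blast
qed

lemma potential_loss_decay:
  assumes \<delta>: "\<And>t. t \<ge> 0 \<Longrightarrow> \<delta> \<le> norm (y t)" "\<delta> \<ge> 0" and "t \<ge> 0"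
  shows "potential L z (y t) + 2 * real L * \<delta>\<^sup>2 * (t * loss L A b (y t)) \<le> potential L z (y 0)"
proof -
  define c where "c = 2 * real L * \<delta>\<^sup>2"
  define l where "l t = loss L A b (y t)" for t
  define \<rho> where "\<rho> t = (norm (y t))\<^sup>2" for t
  define \<gamma> where "\<gamma> t = (norm (loss_grad L A b (y t)))\<^sup>2" for t
  have "((\<lambda>t. potential L z (y t) + c * (t * l t)) has_real_derivative
      - (2 * real L) * \<rho> s * l s + c * (1 * l s + - (\<rho> s * \<gamma> s) * s)) (at s within {0..})"
    if "s \<ge> 0" for s
    using potential_flow_deriv[OF that] loss_flow_deriv[OF that] unfolding l_def \<rho>_def \<gamma>_def
    by (intro DERIV_add DERIV_cmult DERIV_mult DERIV_ident) simp_all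
  moreover have "- (2 * real L) * \<rho> s * l s + c * (1 * l s + - (\<rho> s * \<gamma> s) * s) \<le> 0"
    if "s \<ge> 0" for s
  proof -
    have "\<delta>\<^sup>2 \<le> \<rho> s"
      using \<delta> that by (simp add: \<rho>_def power_mono)
    then have "c * l s \<le> 2 * real L * \<rho> s * l s"
      unfolding c_def l_def by (simp add: loss_nonneg mult_left_mono mult_right_mono)
    moreover have "0 \<le> c * (\<rho> s * \<gamma> s * s)"
      using that by (simp add: c_def \<rho>_def \<gamma>_def)
    ultimately show ?thesis
      by (simp add: algebra_simps)
  qed
  ultimately have "potential L z (y t) + c * (t * l t) \<le> potential L z (y 0) + c * (0 * l 0)"
    by (rule nonincreasing_of_deriv_nonpos[OF _ _ \<open>t \<ge> 0\<close>])
  then show ?thesis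
    by (simp add: c_def l_def)
qed

lemma flow_loss_bound:
  obtains C where "\<And>t. t > 0 \<Longrightarrow> loss L A b (y t) \<le> C / t"
proof -
  obtain \<delta> where \<delta>: "\<delta> > 0" "\<And>t. t \<ge> 0 \<Longrightarrow> \<delta> \<le> norm (y t)"
    using flow_norm_lower_bound by blast
  define c where "c = 2 * real L * \<delta>\<^sup>2"
  have c: "c > 0"
    using L \<delta>(1) by (simp add: c_def)
  have "loss L A b (y t) \<le> (potential L z (y 0) + (norm z)\<^sup>2 / 2) / c / t" if "t > 0" for t
  proof -
    have "c * t * loss L A b (y t) \<le> potential L z (y 0) + (norm z)\<^sup>2 / 2"
      using potential_loss_decay[OF \<delta>(2) _, of t] potential_lower_bound[OF L flow_pos z_nonneg, of t]
        \<delta>(1) that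
      by (simp add: c_def mult.assoc)
    with c that show ?thesis
      by (simp add: field_simps)
  qed
  with that show ?thesis
    by blast
qed

lemma loss_tendsto_0: "((\<lambda>t. loss L A b (y t)) \<longlongrightarrow> 0) at_top"
proof -
  obtain C where C: "\<And>t. t > 0 \<Longrightarrow> loss L A b (y t) \<le> C / t"
    using flow_loss_bound by blast
  have lim: "((\<lambda>t. C / t) \<longlongrightarrow> 0) at_top"
    by (rule tendsto_divide_0[OF tendsto_const filterlim_ident[THEN filterlim_at_top_imp_at_infinity]])
  have bound: "eventually (\<lambda>t. loss L A b (y t) \<le> C / t) at_top"
    using eventually_gt_at_top[of 0] by (rule eventually_mono) (rule C)
  show ?thesis
    by (rule tendsto_sandwich[OF _ bound tendsto_const lim]) (simp add: loss_nonneg)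
qed

end

theorem mainTheorem18:
  fixes L :: nat and A :: "real^'n^'m" and b :: "real^'m"
    and r :: "real \<Rightarrow> real" and u :: "real \<Rightarrow> real^'n"
  assumes "L \<ge> 2"
    and "b \<noteq> 0"
    and "\<exists>z. (\<forall>i. z $ i \<ge> 0) \<and> A *v z = b"
    and flow: "\<forall>t\<ge>0. \<exists>gr gu.
               ((\<lambda>s. wn_loss L A b s (u t)) has_real_derivative gr) (at (r t)) \<and>
               (GDERIV (\<lambda>v. wn_loss L A b (r t) v) (u t) :> gu) \<and>
               (r has_real_derivative (- ((r t)\<^sup>2) * gr)) (at t within {0..}) \<and>
               (u has_vector_derivative (- gu)) (at t within {0..})"
    and "r 0 > 0"
    and "\<forall>i. u 0 $ i > 0"
    and "norm (u 0) = 1"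
  shows "((\<lambda>t. loss L A b ((r t / norm (u t)) *\<^sub>R u t)) \<longlongrightarrow> 0) at_top"
proof -
  obtain z where z: "\<forall>i. z $ i \<ge> 0" "A *v z = b"
    using assms(3) by blast
  have wn: "wn_flow L A b r u"
    using flow unfolding wn_flow_def .
  have unit: "norm (u t) = 1" if "t \<ge> 0" for t
    using wn_flow_norm_const[OF wn that] assms(7) by simp
  interpret scaled_gradient_flow L A b z "\<lambda>t. r t *\<^sub>R u t"
    using assms(1,2,5,6) z wn_flow_product_deriv[OF wn _ _ unit]
    by unfold_locales auto
  have "eventually (\<lambda>t. loss L A b (r t *\<^sub>R u t) = loss L A b ((r t / norm (u t)) *\<^sub>R u t)) at_top"
    using eventually_ge_at_top[of 0] by (rule eventually_mono) (simp add: unit)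
  then show ?thesis
    using loss_tendsto_0 by (rule tendsto_cong[THEN iffD1])
qed

end
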